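(* Let $B$ be a finite one-generator skew brace and $x\in B$ such that $B=B(x)$. Then the orbit $X$ of $x$ under the subgroup of $\mathrm{Sym}(B)$ generated by $\{\sigma_a,\delta_a: a\in B\}$ is a transitive cycle base of $B$.
   Context: A skew brace is a triple $(B,+,\circ)$ where $(B,+)$ and $(B,\circ)$ are groups and $a\circ(b+c)=a\circ b-a+a\circ c$; $a^-$ is the inverse in $(B,\circ)$. Put $\lambda_a(b):=-a+a\circ b$, $\delta_a(b):=a\circ b-a$, $\sigma_a:=\lambda_{a^-}$ (so the group generated by $\{\sigma_a,\delta_a\}$ equals that generated by $\{\lambda_a,\delta_a\}$). $B(x)$ is the smallest subset containing $x$ that is a subgroup of both $(B,+)$ and $(B,\circ)$; $B$ is one-generator if $B=B(x)$ for some $x$. A transitive cycle base of $B$ is a subset that is a single orbit of the group generated by $\{\lambda_a,\delta_a:a\in B\}$ and generates $(B,+)$. *)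

theory Defs
  imports "HOL-Algebra.Generated_Groups" "HOL-Algebra.Bij"
begin

definition skew_brace :: "('a, 'b) monoid_scheme \<Rightarrow> ('a, 'c) monoid_scheme \<Rightarrow> bool" where
  "skew_brace A M \<longleftrightarrow> group A \<and> group M \<and> carrier A = carrier M \<and>
     (\<forall>a\<in>carrier A. \<forall>b\<in>carrier A. \<forall>c\<in>carrier A.
        a \<otimes>\<^bsub>M\<^esub> (b \<otimes>\<^bsub>A\<^esub> c)
          = (a \<otimes>\<^bsub>M\<^esub> b) \<otimes>\<^bsub>A\<^esub> inv\<^bsub>A\<^esub> a \<otimes>\<^bsub>A\<^esub> (a \<otimes>\<^bsub>M\<^esub> c))"

definition brace_lambda :: "('a, 'b) monoid_scheme \<Rightarrow> ('a, 'c) monoid_scheme \<Rightarrow> 'a \<Rightarrow> 'a \<Rightarrow> 'a" where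
  "brace_lambda A M a = (\<lambda>b\<in>carrier A. inv\<^bsub>A\<^esub> a \<otimes>\<^bsub>A\<^esub> (a \<otimes>\<^bsub>M\<^esub> b))"

definition brace_delta :: "('a, 'b) monoid_scheme \<Rightarrow> ('a, 'c) monoid_scheme \<Rightarrow> 'a \<Rightarrow> 'a \<Rightarrow> 'a" where
  "brace_delta A M a = (\<lambda>b\<in>carrier A. (a \<otimes>\<^bsub>M\<^esub> b) \<otimes>\<^bsub>A\<^esub> inv\<^bsub>A\<^esub> a)"

definition brace_sigma :: "('a, 'b) monoid_scheme \<Rightarrow> ('a, 'c) monoid_scheme \<Rightarrow> 'a \<Rightarrow> 'a \<Rightarrow> 'a" where
  "brace_sigma A M a = brace_lambda A M (inv\<^bsub>M\<^esub> a)"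

definition brace_gen :: "('a, 'b) monoid_scheme \<Rightarrow> ('a, 'c) monoid_scheme \<Rightarrow> 'a \<Rightarrow> 'a set" where
  "brace_gen A M x = \<Inter>{S. x \<in> S \<and> subgroup S A \<and> subgroup S M}"

definition perm_orbit :: "'a set \<Rightarrow> ('a \<Rightarrow> 'a) set \<Rightarrow> 'a \<Rightarrow> 'a set" where
  "perm_orbit S F y = {g y | g. g \<in> generate (BijGroup S) F}"

definition lambda_delta_gens :: "('a, 'b) monoid_scheme \<Rightarrow> ('a, 'c) monoid_scheme \<Rightarrow> ('a \<Rightarrow> 'a) set" where
  "lambda_delta_gens A M = (\<Union>a\<in>carrier A. {brace_lambda A M a, brace_delta A M a})"

definition sigma_delta_gens :: "('a, 'b) monoid_scheme \<Rightarrow> ('a, 'c) monoid_scheme \<Rightarrow> ('a \<Rightarrow> 'a) set" where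
  "sigma_delta_gens A M = (\<Union>a\<in>carrier A. {brace_sigma A M a, brace_delta A M a})"

definition transitive_cycle_base :: "('a, 'b) monoid_scheme \<Rightarrow> ('a, 'c) monoid_scheme \<Rightarrow> 'a set \<Rightarrow> bool" where
  "transitive_cycle_base A M X \<longleftrightarrow> X \<subseteq> carrier A \<and>
     (\<exists>y\<in>carrier A. X = perm_orbit (carrier A) (lambda_delta_gens A M) y) \<and>
     generate A X = carrier A"

end

theory Submission
  imports Defs
begin

text \<open>Every \<lambda>_a is an automorphism of (B,+) and lies in the group generated by the
\<sigma>_a and \<delta>_a, so the orbit X of x is \<lambda>-invariant and hence so is the additive subgroup H
generated by X. A \<lambda>-invariant additive subgroup is also a subgroup of (B,\<circ>), because
a \<circ> h = a + \<lambda>_a(h) and a^- = \<lambda>_b(-a) for b = a^-. Thus H contains B(x) = B.\<close>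

lemma (in group) bij_betw_mult_left: "a \<in> carrier G \<Longrightarrow> bij_betw ((\<otimes>) a) (carrier G) (carrier G)"
  by (rule bij_betw_byWitness[where f' = "(\<otimes>) (inv a)"]) (auto simp: m_assoc [symmetric])

lemma (in group) bij_betw_mult_right:
  "a \<in> carrier G \<Longrightarrow> bij_betw (\<lambda>b. b \<otimes> a) (carrier G) (carrier G)"
  by (rule bij_betw_byWitness[where f' = "\<lambda>b. b \<otimes> inv a"]) (auto simp: m_assoc)

lemma generate_BijGroup_subset_Bij:
  assumes "F \<subseteq> Bij S" shows "generate (BijGroup S) F \<subseteq> Bij S"
proof -
  have "carrier (BijGroup S) = Bij S"
    by (simp add: BijGroup_def)
  then show ?thesis
    using group.generate_in_carrier[OF group_BijGroup, of F S] assms by auto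
qed

lemma perm_orbit_subset:
  assumes "F \<subseteq> Bij S" and "y \<in> S"
  shows "perm_orbit S F y \<subseteq> S"
  using generate_BijGroup_subset_Bij[OF assms(1)] assms(2)
  by (auto simp: perm_orbit_def dest!: Bij_imp_funcset)

lemma self_in_perm_orbit:
  assumes "y \<in> S" shows "y \<in> perm_orbit S F y"
proof -
  have "\<one>\<^bsub>BijGroup S\<^esub> y = y"
    using assms by (simp add: BijGroup_def)
  then show ?thesis
    unfolding perm_orbit_def by (metis (mono_tags, lifting) generate.one mem_Collect_eq)
qed

lemma perm_orbit_closed:
  assumes "F \<subseteq> Bij S" and "y \<in> S" and "f \<in> F" and "z \<in> perm_orbit S F y"
  shows "f z \<in> perm_orbit S F y"
proof -
  obtain g where g: "g \<in> generate (BijGroup S) F" and z: "z = g y"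
    using assms(4) unfolding perm_orbit_def by blast
  have "g \<in> Bij S"
    using g generate_BijGroup_subset_Bij[OF assms(1)] by blast
  then have "(f \<otimes>\<^bsub>BijGroup S\<^esub> g) y = f z"
    using assms(1-3) z by (auto simp: BijGroup_def compose_def)
  moreover have "f \<otimes>\<^bsub>BijGroup S\<^esub> g \<in> generate (BijGroup S) F"
    using generate.eng[OF generate.incl[OF assms(3)] g] .
  ultimately show ?thesis
    unfolding perm_orbit_def by (metis (mono_tags, lifting) mem_Collect_eq)
qed

locale skew_brace_struct = A: group A + M: group M
  for A :: "('a, 'b) monoid_scheme" and M :: "('a, 'c) monoid_scheme" +
  assumes carrier_M: "carrier M = carrier A"
    and brace_law: "\<And>a b c. \<lbrakk>a \<in> carrier A; b \<in> carrier A; c \<in> carrier A\<rbrakk> \<Longrightarrow>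
        a \<otimes>\<^bsub>M\<^esub> (b \<otimes>\<^bsub>A\<^esub> c) = (a \<otimes>\<^bsub>M\<^esub> b) \<otimes>\<^bsub>A\<^esub> inv\<^bsub>A\<^esub> a \<otimes>\<^bsub>A\<^esub> (a \<otimes>\<^bsub>M\<^esub> c)"

lemma skew_brace_struct_if_skew_brace: "skew_brace A M \<Longrightarrow> skew_brace_struct A M"
  unfolding skew_brace_def skew_brace_struct_def skew_brace_struct_axioms_def by auto

context skew_brace_struct
begin

lemma M_mult_closed [simp]: "\<lbrakk>a \<in> carrier A; b \<in> carrier A\<rbrakk> \<Longrightarrow> a \<otimes>\<^bsub>M\<^esub> b \<in> carrier A"
  using M.m_closed carrier_M by auto

lemma M_inv_closed [simp]: "a \<in> carrier A \<Longrightarrow> inv\<^bsub>M\<^esub> a \<in> carrier A"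
  using M.inv_closed carrier_M by auto

lemma M_mult_A_one: assumes a: "a \<in> carrier A" shows "a \<otimes>\<^bsub>M\<^esub> \<one>\<^bsub>A\<^esub> = a"
proof -
  define y where "y = a \<otimes>\<^bsub>M\<^esub> \<one>\<^bsub>A\<^esub>"
  have y: "y \<in> carrier A" using a by (simp add: y_def)
  have "y = y \<otimes>\<^bsub>A\<^esub> inv\<^bsub>A\<^esub> a \<otimes>\<^bsub>A\<^esub> y"
    using brace_law[OF a A.one_closed A.one_closed] by (simp add: y_def)
  then have "y \<otimes>\<^bsub>A\<^esub> inv\<^bsub>A\<^esub> a = \<one>\<^bsub>A\<^esub>"
    using a y by (metis A.inv_closed A.m_closed A.r_cancel_one')
  then show ?thesis
    using a y by (metis A.inv_closed A.inv_equality A.inv_inv y_def)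
qed

lemma M_one_eq_A_one: "\<one>\<^bsub>M\<^esub> = \<one>\<^bsub>A\<^esub>"
  using M_mult_A_one[of "\<one>\<^bsub>M\<^esub>"] M.l_one[of "\<one>\<^bsub>A\<^esub>"] carrier_M by (metis A.one_closed M.one_closed)

lemma brace_lambda_apply:
  "b \<in> carrier A \<Longrightarrow> brace_lambda A M a b = inv\<^bsub>A\<^esub> a \<otimes>\<^bsub>A\<^esub> (a \<otimes>\<^bsub>M\<^esub> b)"
  by (simp add: brace_lambda_def)

lemma M_mult_eq_A_mult_lambda:
  "\<lbrakk>a \<in> carrier A; b \<in> carrier A\<rbrakk> \<Longrightarrow> a \<otimes>\<^bsub>M\<^esub> b = a \<otimes>\<^bsub>A\<^esub> brace_lambda A M a b"
  by (simp add: brace_lambda_apply A.m_assoc [symmetric])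

lemma M_inv_eq_lambda_A_inv:
  assumes a: "a \<in> carrier A"
  shows "inv\<^bsub>M\<^esub> a = brace_lambda A M (inv\<^bsub>M\<^esub> a) (inv\<^bsub>A\<^esub> a)"
proof -
  define c where "c = inv\<^bsub>M\<^esub> a"
  have c: "c \<in> carrier A" and ca: "c \<otimes>\<^bsub>M\<^esub> a = \<one>\<^bsub>A\<^esub>"
    using a carrier_M M_one_eq_A_one by (auto simp: c_def)
  have "c = c \<otimes>\<^bsub>M\<^esub> (a \<otimes>\<^bsub>A\<^esub> inv\<^bsub>A\<^esub> a)"
    using a c by (simp add: M_mult_A_one)
  also have "\<dots> = inv\<^bsub>A\<^esub> c \<otimes>\<^bsub>A\<^esub> (c \<otimes>\<^bsub>M\<^esub> inv\<^bsub>A\<^esub> a)"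
    using brace_law[OF c a A.inv_closed[OF a]] a c ca by simp
  finally show ?thesis
    using a by (simp add: brace_lambda_apply c_def)
qed

lemma brace_lambda_hom: "a \<in> carrier A \<Longrightarrow> brace_lambda A M a \<in> hom A A"
  by (rule homI) (simp_all add: brace_lambda_apply brace_law A.m_assoc)

lemma brace_lambda_Bij: assumes a: "a \<in> carrier A" shows "brace_lambda A M a \<in> Bij (carrier A)"
proof -
  have "bij_betw ((\<otimes>\<^bsub>A\<^esub>) (inv\<^bsub>A\<^esub> a) \<circ> (\<otimes>\<^bsub>M\<^esub>) a) (carrier A) (carrier A)"
    using M.bij_betw_mult_left[of a] A.bij_betw_mult_left[of "inv\<^bsub>A\<^esub> a"] a carrier_M
    by (auto intro: bij_betw_trans)
  then show ?thesis
    by (simp add: Bij_def brace_lambda_def comp_def)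
qed

lemma brace_delta_Bij: assumes a: "a \<in> carrier A" shows "brace_delta A M a \<in> Bij (carrier A)"
proof -
  have "bij_betw ((\<lambda>b. b \<otimes>\<^bsub>A\<^esub> inv\<^bsub>A\<^esub> a) \<circ> (\<otimes>\<^bsub>M\<^esub>) a) (carrier A) (carrier A)"
    using M.bij_betw_mult_left[of a] A.bij_betw_mult_right[of "inv\<^bsub>A\<^esub> a"] a carrier_M
    by (auto intro: bij_betw_trans)
  then show ?thesis
    by (simp add: Bij_def brace_delta_def comp_def)
qed

lemma lambda_delta_gens_subset_Bij: "lambda_delta_gens A M \<subseteq> Bij (carrier A)"
  unfolding lambda_delta_gens_def using brace_lambda_Bij brace_delta_Bij by auto

lemma sigma_delta_gens_eq: "sigma_delta_gens A M = lambda_delta_gens A M"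
proof -
  have inv_M_image: "m_inv M ` carrier A = carrier A"
  proof
    show "carrier A \<subseteq> m_inv M ` carrier A"
      using M.inv_inv carrier_M by (metis M_inv_closed image_eqI subsetI)
  qed auto
  have "sigma_delta_gens A M = brace_lambda A M ` m_inv M ` carrier A \<union> brace_delta A M ` carrier A"
    unfolding sigma_delta_gens_def brace_sigma_def by auto
  also have "\<dots> = lambda_delta_gens A M"
    unfolding inv_M_image lambda_delta_gens_def by auto
  finally show ?thesis .
qed

lemma subgroup_M_if_lambda_invariant:
  assumes H: "subgroup H A"
    and lambda_closed: "\<And>a h. \<lbrakk>a \<in> carrier A; h \<in> H\<rbrakk> \<Longrightarrow> brace_lambda A M a h \<in> H"
  shows "subgroup H M"
proof
  have HA: "H \<subseteq> carrier A" using H subgroup.subset by blast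
  show "H \<subseteq> carrier M" using HA carrier_M by simp
  show "\<one>\<^bsub>M\<^esub> \<in> H" using H subgroup.one_closed M_one_eq_A_one by fastforce
  show "a \<otimes>\<^bsub>M\<^esub> h \<in> H" if "a \<in> H" "h \<in> H" for a h
  proof -
    have "a \<in> carrier A" "h \<in> carrier A" using that HA by auto
    then show ?thesis
      using that lambda_closed[of a h] subgroup.m_closed[OF H] M_mult_eq_A_mult_lambda[of a h] by simp
  qed
  show "inv\<^bsub>M\<^esub> a \<in> H" if "a \<in> H" for a
  proof -
    have a: "a \<in> carrier A" using that HA by auto
    have "brace_lambda A M (inv\<^bsub>M\<^esub> a) (inv\<^bsub>A\<^esub> a) \<in> H"
      using a that lambda_closed subgroup.m_inv_closed[OF H] by simp
    then show ?thesis
      using M_inv_eq_lambda_A_inv[OF a] by metis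
  qed
qed

lemma generate_lambda_invariant:
  assumes X: "X \<subseteq> carrier A" and a: "a \<in> carrier A"
    and invariant: "brace_lambda A M a ` X \<subseteq> X"
  shows "brace_lambda A M a ` generate A X \<subseteq> generate A X"
proof -
  interpret group_hom A A "brace_lambda A M a"
    using brace_lambda_hom[OF a] by unfold_locales
  show ?thesis
    using generate_img[OF X] A.mono_generate[OF invariant] by simp
qed

lemma brace_gen_subset_generate_orbit:
  assumes x: "x \<in> carrier A"
  shows "brace_gen A M x \<subseteq> generate A (perm_orbit (carrier A) (lambda_delta_gens A M) x)"
proof -
  let ?X = "perm_orbit (carrier A) (lambda_delta_gens A M) x"
  let ?H = "generate A ?X"
  have X: "?X \<subseteq> carrier A"
    using perm_orbit_subset[OF lambda_delta_gens_subset_Bij x] .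
  have "brace_lambda A M a ` ?X \<subseteq> ?X" if "a \<in> carrier A" for a
    using perm_orbit_closed[OF lambda_delta_gens_subset_Bij x] that
    by (auto simp: lambda_delta_gens_def)
  then have "brace_lambda A M a ` ?H \<subseteq> ?H" if "a \<in> carrier A" for a
    using generate_lambda_invariant[OF X that] that by blast
  then have "subgroup ?H M"
    using subgroup_M_if_lambda_invariant[OF A.generate_is_subgroup[OF X]] by blast
  moreover have "x \<in> ?H"
    using generate.incl[OF self_in_perm_orbit[OF x]] .
  ultimately show ?thesis
    using A.generate_is_subgroup[OF X] unfolding brace_gen_def by blast
qed

end

theorem mainTheorem19:
  fixes A :: "('a, 'b) monoid_scheme" and M :: "('a, 'c) monoid_scheme" and x :: 'a
  assumes "skew_brace A M"
    and "finite (carrier A)"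
    and "x \<in> carrier A"
    and "brace_gen A M x = carrier A"
  shows "transitive_cycle_base A M (perm_orbit (carrier A) (sigma_delta_gens A M) x)"
proof -
  interpret skew_brace_struct A M
    using skew_brace_struct_if_skew_brace[OF assms(1)] .
  let ?X = "perm_orbit (carrier A) (lambda_delta_gens A M) x"
  have X: "?X \<subseteq> carrier A"
    using perm_orbit_subset[OF lambda_delta_gens_subset_Bij assms(3)] .
  have "generate A ?X = carrier A"
    using brace_gen_subset_generate_orbit[OF assms(3)] A.generate_in_carrier[OF X] assms(4)
    by blast
  then show ?thesis
    unfolding transitive_cycle_base_def sigma_delta_gens_eq using X assms(3) by blast
qed

end
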